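(* Let $d\ge1$ and let $\{e_j\}_{j=1}^d$ be an orthonormal basis of $\mathbb C^d$. There is a map $F:\mathbb R^{3d-2}\to\mathbb C^d$ (depending on the basis) such that for every $x\in\mathbb C^d$ which is full with respect to $\{e_j\}_{j=1}^d$, $$F\big(\mathcal A_{\{e_j\}}(x)\big)=\frac{\langle e_1,x\rangle}{|\langle e_1,x\rangle|}\,x .$$ That is, the vector $y=\frac{\langle e_1,x\rangle}{|\langle e_1,x\rangle|}x$ is determined by the values $\mathcal A_{\{e_j\}}(x)$.
   Context: $\mathbb C^d$ carries the standard inner product $\langle u,v\rangle=\sum_k u_k\overline{v_k}$. A vector $x$ is called full with respect to a basis $\{e_j\}_{j=1}^d$ if $\langle x,e_j\rangle\ne0$ for all $j$. The measurement vectors are $f_j=e_j$ for $1\le j\le d$, $f_j=e_{j-d}-e_{j-d+1}$ for $d+1\le j\le 2d-1$, and $f_j=e_{j-(2d-1)}-ie_{j-(2d-1)+1}$ for $2d\le j\le 3d-2$; the magnitude measurement map is $\mathcal A_{\{e_j\}}(x)=(|\langle x,f_j\rangle|^2)_{j=1}^{3d-2}\in\mathbb R^{3d-2}$. *)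

theory Defs
  imports "HOL-Analysis.Analysis"
begin

text \<open>Vectors in C^d are represented as complex lists of length d.
  Standard inner product <u,v> = sum_k u_k * conj(v_k).\<close>

definition cinner :: "complex list \<Rightarrow> complex list \<Rightarrow> complex" where
  "cinner u v = (\<Sum>k<length u. u ! k * cnj (v ! k))"

definition orthonormal_basis :: "nat \<Rightarrow> complex list list \<Rightarrow> bool" where
  "orthonormal_basis d es \<longleftrightarrow> length es = d \<and> (\<forall>e\<in>set es. length e = d) \<and>
     (\<forall>i<d. \<forall>j<d. cinner (es ! i) (es ! j) = (if i = j then 1 else 0))"

text \<open>Basis e_j (1-indexed in the paper) is es ! (j-1).\<close>
definition full :: "complex list list \<Rightarrow> complex list \<Rightarrow> bool" where
  "full es x \<longleftrightarrow> (\<forall>e\<in>set es. cinner x e \<noteq> 0)"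

definition vsub :: "complex list \<Rightarrow> complex list \<Rightarrow> complex list" where
  "vsub u v = map2 (-) u v"

definition vscale :: "complex \<Rightarrow> complex list \<Rightarrow> complex list" where
  "vscale c u = map ((*) c) u"

text \<open>Measurement vectors f_1..f_{3d-2} (list index = paper index - 1):
  e_1..e_d, then e_j - e_{j+1} (j=1..d-1), then e_j - i e_{j+1} (j=1..d-1).\<close>
definition meas_vectors :: "complex list list \<Rightarrow> complex list list" where
  "meas_vectors es = es
     @ map (\<lambda>j. vsub (es ! j) (es ! (j+1))) [0..<length es - 1]
     @ map (\<lambda>j. vsub (es ! j) (vscale \<i> (es ! (j+1)))) [0..<length es - 1]"

definition meas_map :: "complex list list \<Rightarrow> complex list \<Rightarrow> real list" where
  "meas_map es x = map (\<lambda>f. (cmod (cinner x f))\<^sup>2) (meas_vectors es)"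

end

theory Submission
  imports Defs "Jordan_Normal_Form.Determinant"
begin

text \<open>Write \<open>c\<^sub>j = \<langle>x, e\<^sub>j\<rangle>\<close>. The first \<open>d\<close> measurements give the moduli \<open>|c\<^sub>j|\<close>, and by
  polarization the remaining ones give the products \<open>c\<^sub>j cnj c\<^sub>j\<^sub>+\<^sub>1\<close>. Since all \<open>c\<^sub>j\<close> are
  nonzero, the coordinates of the phase-normalized vector \<open>cnj c\<^sub>0 / |c\<^sub>0| \<cdot> x\<close> are recovered one
  after another from these data, and a vector is determined by its coordinates in an
  orthonormal basis.\<close>

lemma length_vscale [simp]: "length (vscale a u) = length u"
  by (simp add: vscale_def)

lemma cinner_vsub_left:
  assumes "length u = length x"
  shows "cinner (vsub x u) e = cinner x e - cinner u e"
  using assms unfolding cinner_def vsub_def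
  by (simp add: algebra_simps sum_subtractf)

lemma cinner_vsub_right:
  assumes "length u = length x" "length v = length x"
  shows "cinner x (vsub u v) = cinner x u - cinner x v"
  using assms unfolding cinner_def vsub_def
  by (simp add: algebra_simps sum_subtractf)

lemma cinner_vscale_left: "cinner (vscale a x) u = a * cinner x u"
  unfolding cinner_def vscale_def
  by (simp add: algebra_simps sum_distrib_left)

lemma cinner_vscale_right:
  assumes "length u = length x"
  shows "cinner x (vscale a u) = cnj a * cinner x u"
  using assms unfolding cinner_def vscale_def
  by (simp add: algebra_simps sum_distrib_left)

lemma cinner_commute:
  assumes "length u = length x"
  shows "cinner u x = cnj (cinner x u)"
  using assms unfolding cinner_def by (simp add: mult.commute)

lemma orthonormal_basis_orthogonal_eq_zero:
  assumes ob: "orthonormal_basis d es" and lz: "length z = d"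
    and orth: "\<forall>i<d. cinner z (es!i) = 0"
  shows "\<forall>k<d. z!k = 0"
proof -
  have le: "\<And>i. i < d \<Longrightarrow> length (es!i) = d"
    using ob unfolding orthonormal_basis_def by auto
  have on: "\<And>i j. i < d \<Longrightarrow> j < d \<Longrightarrow> cinner (es!i) (es!j) = (if i = j then 1 else 0)"
    using ob unfolding orthonormal_basis_def by auto
  define A :: "complex mat" where "A = Matrix.mat d d (\<lambda>(i,k). cnj (es!i!k))"
  define B :: "complex mat" where "B = Matrix.mat d d (\<lambda>(k,j). es!j!k)"
  have A: "A \<in> carrier_mat d d" and B: "B \<in> carrier_mat d d" unfolding A_def B_def by auto
  have AB: "A * B = 1\<^sub>m d"
  proof (rule eq_matI)
    fix i j assume "i < dim_row (1\<^sub>m d)" and "j < dim_col (1\<^sub>m d)"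
    hence i: "i < d" and j: "j < d" by auto
    have "(A * B) $$ (i,j) = (\<Sum>k<d. cnj (es!i!k) * es!j!k)"
      using i j unfolding A_def B_def
      by (simp add: scalar_prod_def Matrix.row_def Matrix.col_def atLeast0LessThan)
    also have "\<dots> = cnj (cinner (es!i) (es!j))"
      unfolding cinner_def using le[OF i] by (simp add: mult.commute)
    also have "\<dots> = 1\<^sub>m d $$ (i,j)" using on[OF i j] i j by simp
    finally show "(A * B) $$ (i,j) = 1\<^sub>m d $$ (i,j)" .
  qed (use A B in auto)
  \<comment> \<open>A one-sided inverse of a square matrix is two-sided: this is where \<open>length es = d\<close> matters.\<close>
  have BA: "B * A = 1\<^sub>m d" by (rule mat_mult_left_right_inverse[OF A B AB])
  define v :: "complex vec" where "v = Matrix.vec d (\<lambda>k. z!k)"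
  have v: "v \<in> carrier_vec d" unfolding v_def by auto
  have Av: "A *\<^sub>v v = 0\<^sub>v d"
  proof (rule eq_vecI)
    fix i assume "i < dim_vec (0\<^sub>v d :: complex vec)"
    hence i: "i < d" by simp
    have "vec_index (A *\<^sub>v v) i = (\<Sum>k<d. cnj (es!i!k) * z!k)"
      using i unfolding A_def v_def
      by (simp add: scalar_prod_def Matrix.row_def atLeast0LessThan)
    also have "\<dots> = cinner z (es!i)" unfolding cinner_def using lz by (simp add: mult.commute)
    finally show "vec_index (A *\<^sub>v v) i = vec_index (0\<^sub>v d) i" using orth i by simp
  qed (use A in simp)
  have "v = B *\<^sub>v (A *\<^sub>v v)" using BA A B v by (simp flip: assoc_mult_mat_vec)
  also have "\<dots> = 0\<^sub>v d" using Av B by (intro eq_vecI) (auto simp: scalar_prod_def)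
  finally show ?thesis unfolding v_def by (metis index_vec index_zero_vec(1))
qed

lemma orthonormal_basis_coordinates_eq:
  assumes ob: "orthonormal_basis d es" and ly: "length y = d" and ly': "length y' = d"
    and coords: "\<And>i. i < d \<Longrightarrow> cinner y (es!i) = cinner y' (es!i)"
  shows "y = y'"
proof -
  have "\<forall>i<d. cinner (vsub y y') (es!i) = 0"
    using coords ly ly' by (simp add: cinner_vsub_left)
  moreover have "length (vsub y y') = d" using ly ly' by (simp add: vsub_def)
  ultimately have "\<forall>k<d. vsub y y' ! k = 0"
    using orthonormal_basis_orthogonal_eq_zero[OF ob] by blast
  then show ?thesis using ly ly' by (intro nth_equalityI) (auto simp: vsub_def)
qed

lemma polarization_complex:
  fixes a b :: complex
  shows "a * cnj b = Complex (((cmod a)^2 + (cmod b)^2 - (cmod (a - b))^2)/2)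
                             (((cmod (a + \<i> * b))^2 - (cmod a)^2 - (cmod b)^2)/2)"
  by (simp add: complex_eq_iff cmod_power2) (simp add: power2_eq_square algebra_simps)

lemma phase_normalize_abs:
  fixes z :: complex assumes "z \<noteq> 0"
  shows "cnj z / of_real (cmod z) * z = of_real (cmod z)"
proof -
  have "z * cnj z = of_real ((cmod z)^2)" by (rule complex_norm_square[symmetric])
  then show ?thesis using assms by (simp add: field_simps power2_eq_square mult.commute)
qed

lemma mult_eq_via_conj_product:
  fixes a b k :: complex assumes "a \<noteq> 0"
  shows "k * b = k * a * cnj (a * cnj b) / of_real ((cmod a)^2)"
proof -
  have "a * cnj a = of_real ((cmod a)^2)" by (rule complex_norm_square[symmetric])
  then show ?thesis using assms by (simp add: field_simps)
qed

lemma phase_normalized_eq_of_consecutive_products: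
  fixes c c' :: "nat \<Rightarrow> complex"
  assumes nonzero: "\<And>j. j < d \<Longrightarrow> c j \<noteq> 0"
    and abs_eq: "\<And>j. j < d \<Longrightarrow> cmod (c j) = cmod (c' j)"
    and prod_eq: "\<And>j. j + 1 < d \<Longrightarrow> c j * cnj (c (j+1)) = c' j * cnj (c' (j+1))"
    and "j < d"
  shows "cnj (c 0) / of_real (cmod (c 0)) * c j = cnj (c' 0) / of_real (cmod (c' 0)) * c' j"
  using \<open>j < d\<close>
proof (induction j)
  case 0
  have "c' 0 \<noteq> 0" using nonzero[OF 0] abs_eq[OF 0] by auto
  then show ?case
    using phase_normalize_abs[OF nonzero[OF 0]] phase_normalize_abs[of "c' 0"] abs_eq[OF 0]
    by simp
next
  case (Suc j)
  define p where "p = cnj (c 0) / of_real (cmod (c 0))"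
  define p' where "p' = cnj (c' 0) / of_real (cmod (c' 0))"
  have j: "j < d" using Suc.prems by simp
  have "c' j \<noteq> 0" using nonzero[OF j] abs_eq[OF j] by auto
  have "p * c (Suc j) = p * c j * cnj (c j * cnj (c (j+1))) / of_real ((cmod (c j))^2)"
    using mult_eq_via_conj_product[OF nonzero[OF j], of p "c (j+1)"] by simp
  also have "\<dots> = p' * c' j * cnj (c' j * cnj (c' (j+1))) / of_real ((cmod (c' j))^2)"
    using Suc.IH[OF j] prod_eq[of j] abs_eq[OF j] Suc.prems unfolding p_def p'_def by simp
  also have "\<dots> = p' * c' (Suc j)"
    using mult_eq_via_conj_product[OF \<open>c' j \<noteq> 0\<close>, of p' "c' (j+1)"] by simp
  finally show ?case unfolding p_def p'_def .
qed

lemma meas_map_nth: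
  assumes les: "length es = d" and le: "\<And>i. i < d \<Longrightarrow> length (es!i) = d"
    and lx: "length x = d"
  shows meas_map_nth_basis: "j < d \<Longrightarrow> meas_map es x ! j = (cmod (cinner x (es!j)))^2"
    and meas_map_nth_diff: "j + 1 < d \<Longrightarrow>
          meas_map es x ! (d + j) = (cmod (cinner x (es!j) - cinner x (es!(j+1))))^2"
    and meas_map_nth_rot: "j + 1 < d \<Longrightarrow>
          meas_map es x ! (d + (d - 1) + j) = (cmod (cinner x (es!j) + \<i> * cinner x (es!(j+1))))^2"
proof -
  define D where "D = map (\<lambda>j. vsub (es ! j) (es ! (j+1))) [0..<d - 1]"
  define R where "R = map (\<lambda>j. vsub (es ! j) (vscale \<i> (es ! (j+1)))) [0..<d - 1]"
  have mv: "meas_vectors es = es @ D @ R" unfolding meas_vectors_def D_def R_def les ..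
  have len: "length (es @ D @ R) = d + (d - 1) + (d - 1)" by (simp add: les D_def R_def)
  have entry: "n < d + (d - 1) + (d - 1) \<Longrightarrow>
      meas_map es x ! n = (cmod (cinner x ((es @ D @ R) ! n)))^2" for n
    unfolding meas_map_def mv by (rule nth_map) (simp only: len)
  show "j < d \<Longrightarrow> meas_map es x ! j = (cmod (cinner x (es!j)))^2"
    using entry[of j] les by (simp add: nth_append)
  show "meas_map es x ! (d + j) = (cmod (cinner x (es!j) - cinner x (es!(j+1))))^2"
    if j: "j + 1 < d"
  proof -
    have "(es @ D @ R) ! (d + j) = vsub (es ! j) (es ! (j+1))"
      using les j by (simp add: nth_append D_def less_diff_conv)
    then show ?thesis
      using entry[of "d + j"] j le[of j] le[of "j+1"] lx by (simp add: cinner_vsub_right)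
  qed
  show "meas_map es x ! (d + (d - 1) + j) = (cmod (cinner x (es!j) + \<i> * cinner x (es!(j+1))))^2"
    if j: "j + 1 < d"
  proof -
    have "(es @ D @ R) ! (d + (d - 1) + j) = R ! j"
      using les by (simp add: nth_append D_def)
    also have "\<dots> = vsub (es ! j) (vscale \<i> (es ! (j+1)))" using j by (simp add: R_def less_diff_conv)
    finally show ?thesis
      using entry[of "d + (d - 1) + j"] j le[of j] le[of "j+1"] lx
      by (simp add: cinner_vsub_right cinner_vscale_right)
  qed
qed

definition phase_normalize :: "complex list list \<Rightarrow> complex list \<Rightarrow> complex list" where
  "phase_normalize es x = vscale (cinner (es ! 0) x / complex_of_real (cmod (cinner (es ! 0) x))) x"

lemma meas_map_determines_phase_normalize:
  assumes ob: "orthonormal_basis d es"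
    and lx: "length x = d" and lx': "length x' = d"
    and fx: "full es x" and meas: "meas_map es x = meas_map es x'"
  shows "phase_normalize es x = phase_normalize es x'"
proof -
  have les: "length es = d" and le: "\<And>i. i < d \<Longrightarrow> length (es!i) = d"
    using ob unfolding orthonormal_basis_def by auto
  define c where "c j = cinner x (es!j)" for j
  define c' where "c' j = cinner x' (es!j)" for j
  have nonzero: "c j \<noteq> 0" if "j < d" for j
    using fx les that unfolding full_def c_def by auto
  have abs_eq: "cmod (c j) = cmod (c' j)" if j: "j < d" for j
  proof -
    have "(cmod (c j))^2 = (cmod (c' j))^2"
      using meas_map_nth_basis[OF les le lx j] meas_map_nth_basis[OF les le lx' j] meas
      unfolding c_def c'_def by simp
    then show ?thesis by (simp add: power2_eq_iff_nonneg)
  qed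
  have prod_eq: "c j * cnj (c (j+1)) = c' j * cnj (c' (j+1))" if j: "j + 1 < d" for j
  proof -
    have "(cmod (c j - c (j+1)))^2 = (cmod (c' j - c' (j+1)))^2"
      using meas_map_nth_diff[OF les le lx j] meas_map_nth_diff[OF les le lx' j] meas
      unfolding c_def c'_def by simp
    moreover have "(cmod (c j + \<i> * c (j+1)))^2 = (cmod (c' j + \<i> * c' (j+1)))^2"
      using meas_map_nth_rot[OF les le lx j] meas_map_nth_rot[OF les le lx' j] meas
      unfolding c_def c'_def by simp
    ultimately show ?thesis
      using abs_eq[of j] abs_eq[of "j+1"] j by (subst (1 2) polarization_complex) simp
  qed
  have coord: "cinner (phase_normalize es y) (es!i) =
      cnj (cinner y (es!0)) / of_real (cmod (cinner y (es!0))) * cinner y (es!i)"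
    if "length y = d" "0 < d" for y i
    using that le[of 0] cinner_commute[of "es ! 0" y]
    by (simp add: phase_normalize_def cinner_vscale_left)
  show ?thesis
  proof (rule orthonormal_basis_coordinates_eq[OF ob])
    show "length (phase_normalize es x) = d" "length (phase_normalize es x') = d"
      using lx lx' by (simp_all add: phase_normalize_def)
    show "cinner (phase_normalize es x) (es!i) = cinner (phase_normalize es x') (es!i)"
      if "i < d" for i
    proof -
      have "0 < d" using that by simp
      show ?thesis
        unfolding coord[OF lx \<open>0 < d\<close>] coord[OF lx' \<open>0 < d\<close>]
        using phase_normalized_eq_of_consecutive_products[where c = c and c' = c',
            OF nonzero abs_eq prod_eq that]
        unfolding c_def c'_def .
    qed
  qed
qed

lemma ex_factorization_through:
  assumes "\<And>x x'. P x \<Longrightarrow> P x' \<Longrightarrow> m x = m x' \<Longrightarrow> T x = T x'"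
  shows "\<exists>F. \<forall>x. P x \<longrightarrow> F (m x) = T x"
proof -
  define F where "F v = T (SOME x. P x \<and> m x = v)" for v
  have "F (m x) = T x" if "P x" for x
  proof -
    have "P (SOME x'. P x' \<and> m x' = m x) \<and> m (SOME x'. P x' \<and> m x' = m x) = m x"
      by (rule someI[of _ x]) (simp add: that)
    then show ?thesis unfolding F_def using assms that by blast
  qed
  then show ?thesis by blast
qed

theorem mainTheorem2:
  fixes d :: nat and es :: "complex list list"
  assumes "d \<ge> 1" and "orthonormal_basis d es"
  shows "\<exists>F :: real list \<Rightarrow> complex list.
           \<forall>x. length x = d \<longrightarrow> full es x \<longrightarrow>
             F (meas_map es x) = vscale (cinner (es ! 0) x / complex_of_real (cmod (cinner (es ! 0) x))) x"
proof -
  have "\<exists>F. \<forall>x. (length x = d \<and> full es x) \<longrightarrow> F (meas_map es x) = phase_normalize es x"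
    by (rule ex_factorization_through)
      (use meas_map_determines_phase_normalize[OF assms(2)] in blast)
  then show ?thesis unfolding phase_normalize_def by blast
qed

end
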